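(* If $\alpha\in(-1,1)^N$ (i.e. $|\alpha|_\infty<1$), then for each $n\in\mathbb{N}$ the single-valued fractal operator $\mathcal{F}^\alpha_{\Delta,B_n}:\mathcal{C}(I)\to\mathcal{C}(I)$, $f\mapsto f^\alpha_{\Delta,B_n(f)}$, is bounded below and not compact.
   Context: $I=[x_0,x_N]$, $\mathcal{C}(I)$ real continuous functions with sup norm, $\Delta=\{x_0<\dots<x_N\}$, $N\ge2$, $I_i=[x_{i-1},x_i]$, $L_i(x)=a_ix+b_i$ the affine map of $I$ onto $I_i$ with $L_i(x_0)=x_{i-1}$, $L_i(x_N)=x_i$; $|\alpha|_\infty=\max_i|\alpha_i|$. For $f,b\in\mathcal{C}(I)$ with $b(x_0)=f(x_0)$, $b(x_N)=f(x_N)$, $f^\alpha_{\Delta,b}$ is the unique $g\in\mathcal{C}(I)$ with $g(x)=f(x)+\alpha_i(g-b)(L_i^{-1}(x))$ for $x\in I_i$. $B_n$ is the Bernstein operator $B_nf(x)=\sum_{k=0}^n f\big(x_0+\tfrac kn(x_N-x_0)\big)\binom nk\frac{(x-x_0)^k(x_N-x)^{n-k}}{(x_N-x_0)^n}$. A linear operator $T$ is bounded below if there is $C>0$ with $\|Tf\|_\infty\ge C\|f\|_\infty$ for all $f$. *)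

theory Defs
  imports "HOL-Analysis.Analysis"
begin

text \<open>Partition x 0 < x 1 < ... < x N of I = [x 0, x N]; C(I) is represented by
  functions real \<Rightarrow> real that are continuous on I (values outside I are irrelevant).\<close>

definition Ival :: "(nat \<Rightarrow> real) \<Rightarrow> nat \<Rightarrow> real set" where
  "Ival x N = {x 0 .. x N}"

definition supnorm :: "(nat \<Rightarrow> real) \<Rightarrow> nat \<Rightarrow> (real \<Rightarrow> real) \<Rightarrow> real" where
  "supnorm x N f = Sup ((\<lambda>t. \<bar>f t\<bar>) ` Ival x N)"

text \<open>Inverse of the affine map L_i of I onto I_i = [x (i-1), x i].\<close>
definition Linv :: "(nat \<Rightarrow> real) \<Rightarrow> nat \<Rightarrow> nat \<Rightarrow> real \<Rightarrow> real" where
  "Linv x N i t = x 0 + (t - x (i - 1)) * (x N - x 0) / (x i - x (i - 1))"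

text \<open>The alpha-fractal function f^alpha_{Delta,b}: the unique g continuous on I with the
  self-referential equation on each I_i (normalised to 0 outside I to make it unique).\<close>
definition fractal :: "(nat \<Rightarrow> real) \<Rightarrow> nat \<Rightarrow> (nat \<Rightarrow> real) \<Rightarrow> (real \<Rightarrow> real)
    \<Rightarrow> (real \<Rightarrow> real) \<Rightarrow> (real \<Rightarrow> real)" where
  "fractal x N \<alpha> f b = (THE g. continuous_on (Ival x N) g \<and> (\<forall>t. t \<notin> Ival x N \<longrightarrow> g t = 0) \<and>
     (\<forall>i\<in>{1..N}. \<forall>t\<in>{x (i - 1) .. x i}.
        g t = f t + \<alpha> i * (g (Linv x N i t) - b (Linv x N i t))))"

definition bernstein :: "(nat \<Rightarrow> real) \<Rightarrow> nat \<Rightarrow> nat \<Rightarrow> (real \<Rightarrow> real) \<Rightarrow> (real \<Rightarrow> real)" where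
  "bernstein x N n f = (\<lambda>t. \<Sum>k=0..n. f (x 0 + real k / real n * (x N - x 0)) * real (n choose k)
      * (t - x 0) ^ k * (x N - t) ^ (n - k) / (x N - x 0) ^ n)"

definition fractal_op :: "(nat \<Rightarrow> real) \<Rightarrow> nat \<Rightarrow> (nat \<Rightarrow> real) \<Rightarrow> nat
    \<Rightarrow> (real \<Rightarrow> real) \<Rightarrow> (real \<Rightarrow> real)" where
  "fractal_op x N \<alpha> n f = fractal x N \<alpha> f (bernstein x N n f)"

definition bounded_below_op :: "(nat \<Rightarrow> real) \<Rightarrow> nat \<Rightarrow> ((real \<Rightarrow> real) \<Rightarrow> (real \<Rightarrow> real)) \<Rightarrow> bool" where
  "bounded_below_op x N T \<longleftrightarrow> (\<exists>C>0. \<forall>f. continuous_on (Ival x N) f \<longrightarrow>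
      supnorm x N (T f) \<ge> C * supnorm x N f)"

definition compact_op :: "(nat \<Rightarrow> real) \<Rightarrow> nat \<Rightarrow> ((real \<Rightarrow> real) \<Rightarrow> (real \<Rightarrow> real)) \<Rightarrow> bool" where
  "compact_op x N T \<longleftrightarrow> (\<forall>fs :: nat \<Rightarrow> real \<Rightarrow> real.
      (\<forall>k. continuous_on (Ival x N) (fs k) \<and> supnorm x N (fs k) \<le> 1) \<longrightarrow>
      (\<exists>r g. strict_mono r \<and> continuous_on (Ival x N) g \<and>
         uniform_limit (Ival x N) (\<lambda>k. T (fs (r k))) g sequentially))"

end

theory Submission
  imports Defs
begin

text \<open>Let \<open>a = max\<^sub>i |\<alpha> i| < 1\<close> and let \<open>F f\<close> be the fractal function of \<open>f\<close> with base \<open>B\<^sub>n f\<close>.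
  It exists and is unique because the Read-Bajraktarevic operator is a contraction with factor
  \<open>a\<close>, and \<open>F\<close> is linear because the fractal function depends linearly on \<open>(f, b)\<close>. On \<open>I\<^sub>i\<close> the
  self-referential equation reads \<open>f = F f - \<alpha> i (F f - B\<^sub>n f) \<circ> L\<^sub>i\<^sup>-\<^sup>1\<close>, and \<open>\<parallel>B\<^sub>n f\<parallel> \<le> \<parallel>f\<parallel>\<close>
  since \<open>B\<^sub>n\<close> is positive and fixes constants. Hence \<open>\<parallel>f\<parallel> \<le> \<parallel>F f\<parallel> + a (\<parallel>F f\<parallel> + \<parallel>f\<parallel>)\<close>, that is
  \<open>\<parallel>f\<parallel> \<le> (1 + a) / (1 - a) \<parallel>F f\<parallel>\<close>, so \<open>F\<close> is bounded below. A linear operator bounded below on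
  \<open>C(I)\<close> is not compact: the unit ball contains a sequence at mutual distance \<open>1\<close>, and its images
  stay at mutual distance at least \<open>(1 - a) / (1 + a)\<close>.\<close>

lemma continuous_on_abs_bounded:
  fixes h :: "'a::topological_space \<Rightarrow> real"
  assumes "compact S" and "continuous_on S h"
  obtains M where "\<forall>t\<in>S. \<bar>h t\<bar> \<le> M"
  using compact_imp_bounded[OF compact_continuous_image[OF assms(2,1)]]
  by (auto simp: bounded_real)

lemma abs_le_supnorm:
  assumes "continuous_on (Ival x N) h" and "t \<in> Ival x N"
  shows "\<bar>h t\<bar> \<le> supnorm x N h"
proof -
  obtain M where "\<forall>t\<in>Ival x N. \<bar>h t\<bar> \<le> M"
    using continuous_on_abs_bounded[OF _ assms(1)] by (auto simp: Ival_def)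
  then show ?thesis
    unfolding supnorm_def using assms(2) by (intro cSUP_upper bdd_aboveI2) auto
qed

lemma supnorm_le:
  assumes "x 0 \<le> x N" and "\<forall>t\<in>Ival x N. \<bar>h t\<bar> \<le> M"
  shows "supnorm x N h \<le> M"
  unfolding supnorm_def using assms by (intro cSUP_least) (auto simp: Ival_def)

lemma uniform_limit_geometric_increments:
  fixes g :: "nat \<Rightarrow> 'a \<Rightarrow> 'b::banach"
  assumes "0 \<le> a" "a < 1" and "\<And>k t. t \<in> S \<Longrightarrow> norm (g (Suc k) t - g k t) \<le> a ^ k * D"
  shows "uniform_limit S g (\<lambda>t. g 0 t + (\<Sum>k. g (Suc k) t - g k t)) sequentially"
proof -
  have "summable (\<lambda>k. a ^ k * D)"
    using assms(1,2) by (intro summable_mult2 summable_geometric) auto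
  then have "uniform_limit S (\<lambda>n t. \<Sum>k<n. g (Suc k) t - g k t) (\<lambda>t. \<Sum>k. g (Suc k) t - g k t) sequentially"
    using assms(3) by (rule Weierstrass_m_test[rotated])
  then have "uniform_limit S (\<lambda>n t. g 0 t + (\<Sum>k<n. g (Suc k) t - g k t))
      (\<lambda>t. g 0 t + (\<Sum>k. g (Suc k) t - g k t)) sequentially"
    by (intro uniform_limit_add uniform_limit_const)
  moreover have "g 0 t + (\<Sum>k<n. g (Suc k) t - g k t) = g n t" for n t
    using sum_lessThan_telescope[of "\<lambda>k. g k t" n] by simp
  ultimately show ?thesis by simp
qed

lemma continuous_on_bernstein:
  assumes "x 0 < x N"
  shows "continuous_on S (bernstein x N n f)"
  unfolding bernstein_def using assms by (intro continuous_intros) auto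

lemma bernstein_left_endpoint:
  assumes "x 0 < x N"
  shows "bernstein x N n f (x 0) = f (x 0)"
proof -
  have "bernstein x N n f (x 0) = (\<Sum>k\<in>insert 0 {1..n}. f (x 0 + real k / real n * (x N - x 0))
      * real (n choose k) * (x 0 - x 0) ^ k * (x N - x 0) ^ (n - k) / (x N - x 0) ^ n)"
    unfolding bernstein_def by (intro sum.cong) auto
  also have "\<dots> = f (x 0)"
    using assms by (subst sum.insert) (auto intro!: sum.neutral simp: power_0_left)
  finally show ?thesis .
qed

lemma bernstein_right_endpoint:
  assumes "x 0 < x N" and "1 \<le> n"
  shows "bernstein x N n f (x N) = f (x N)"
proof -
  have "bernstein x N n f (x N) = (\<Sum>k\<in>insert n {0..<n}. f (x 0 + real k / real n * (x N - x 0))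
      * real (n choose k) * (x N - x 0) ^ k * (x N - x N) ^ (n - k) / (x N - x 0) ^ n)"
    unfolding bernstein_def by (intro sum.cong) auto
  also have "\<dots> = f (x 0 + (x N - x 0))"
    using assms by (subst sum.insert) (auto intro!: sum.neutral simp: power_0_left)
  finally show ?thesis by simp
qed

lemma bernstein_diff:
  "bernstein x N n f t - bernstein x N n g t = bernstein x N n (\<lambda>s. f s - g s) t"
  unfolding bernstein_def sum_subtractf[symmetric]
  by (intro sum.cong) (simp_all add: left_diff_distrib diff_divide_distrib)

text \<open>The Bernstein basis polynomials are nonnegative on \<open>I\<close> and sum to \<open>1\<close>, and the
  nodes \<open>x 0 + k/n (x N - x 0)\<close> lie in \<open>I\<close>.\<close>
lemma bernstein_abs_le:
  assumes "x 0 < x N" and h: "\<forall>s\<in>{x 0..x N}. \<bar>h s\<bar> \<le> M" and t: "t \<in> {x 0..x N}"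
  shows "\<bar>bernstein x N n h t\<bar> \<le> M"
proof -
  define L where "L = x N - x 0"
  have L: "0 < L" using assms(1) by (simp add: L_def)
  define w where "w k = real (n choose k) * (t - x 0) ^ k * (x N - t) ^ (n - k) / L ^ n" for k
  have w_nonneg: "0 \<le> w k" for k
    using t L by (auto simp: w_def)
  have "(\<Sum>k\<in>{0..n}. w k)
      = (\<Sum>k\<le>n. real (n choose k) * (t - x 0) ^ k * (x N - t) ^ (n - k)) / L ^ n"
    by (simp add: w_def sum_divide_distrib atLeast0AtMost)
  also have "\<dots> = ((t - x 0) + (x N - t)) ^ n / L ^ n"
    by (simp only: binomial_ring)
  finally have w_sum: "(\<Sum>k\<in>{0..n}. w k) = 1"
    using L by (simp add: L_def)
  have node: "x 0 + real k / real n * L \<in> {x 0..x N}" if "k \<le> n" for k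
  proof -
    have "0 \<le> real k / real n" "real k / real n \<le> 1"
      using that by (auto simp: divide_le_eq)
    then show ?thesis
      using L mult_left_le_one_le[of L "real k / real n"] by (auto simp: L_def mult.commute)
  qed
  have "bernstein x N n h t = (\<Sum>k\<in>{0..n}. h (x 0 + real k / real n * L) * w k)"
    unfolding bernstein_def w_def L_def by (intro sum.cong) (simp_all add: mult.assoc)
  also have "\<bar>\<dots>\<bar> \<le> (\<Sum>k\<in>{0..n}. \<bar>h (x 0 + real k / real n * L)\<bar> * w k)"
    using w_nonneg by (intro order_trans[OF sum_abs] sum_mono) (simp add: abs_mult)
  also have "\<dots> \<le> (\<Sum>k\<in>{0..n}. M * w k)"
    using h node w_nonneg by (intro sum_mono mult_right_mono) auto
  also have "\<dots> = M"
    by (simp add: sum_distrib_left[symmetric] w_sum)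
  finally show ?thesis .
qed

lemma bounded_below_opI:
  assumes "0 < K" and "\<And>f. continuous_on (Ival x N) f \<Longrightarrow> supnorm x N f \<le> K * supnorm x N (T f)"
  shows "bounded_below_op x N T"
  unfolding bounded_below_op_def
proof (intro exI[of _ "1 / K"] conjI allI impI)
  fix f :: "real \<Rightarrow> real"
  assume "continuous_on (Ival x N) f"
  then show "1 / K * supnorm x N f \<le> supnorm x N (T f)"
    using assms by (simp add: field_simps)
qed (use assms in simp)

text \<open>Ramps rising from \<open>0\<close> to \<open>1\<close> on \<open>[p (k+1), p k]\<close>, with \<open>p k = x 0 + (x N - x 0) / 2^k\<close>:
  at \<open>p k\<close> the \<open>k\<close>-th ramp is \<open>1\<close> and all earlier ones vanish.\<close>
lemma unit_ball_separated_sequence: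
  assumes "x 0 < x N"
  obtains fs :: "nat \<Rightarrow> real \<Rightarrow> real"
  where "\<And>k. continuous_on (Ival x N) (fs k)" and "\<And>k. supnorm x N (fs k) \<le> 1"
    and "\<And>j k. j < k \<Longrightarrow> \<exists>t\<in>Ival x N. \<bar>fs j t - fs k t\<bar> = 1"
proof
  define fs where "fs k t = min 1 (max 0 (2 ^ (k + 1) * (t - x 0) / (x N - x 0) - 1))" for k t
  define p where "p k = x 0 + (x N - x 0) / 2 ^ k" for k
  show "continuous_on (Ival x N) (fs k)" for k
    unfolding fs_def using assms by (intro continuous_intros) auto
  show "supnorm x N (fs k) \<le> 1" for k
    using assms by (intro supnorm_le) (auto simp: fs_def)
  have p_mem: "p k \<in> Ival x N" for k
  proof -
    have "(x N - x 0) / 2 ^ k \<le> x N - x 0"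
      using assms by (simp add: divide_le_eq)
    then show ?thesis
      using assms by (simp add: p_def Ival_def)
  qed
  have ramp_at_p: "2 ^ (j + 1) * (p k - x 0) / (x N - x 0) - 1 = 2 ^ (j + 1) / 2 ^ k - 1" for j k
    using assms by (simp add: p_def field_simps)
  fix j k :: nat assume "j < k"
  then have "(2::real) ^ (j + 1) \<le> 2 ^ k"
    by (intro power_increasing) auto
  then have "(2::real) ^ (j + 1) / 2 ^ k \<le> 1"
    by simp
  then have "fs j (p k) = 0" and "fs k (p k) = 1"
    unfolding fs_def ramp_at_p by simp_all
  then show "\<exists>t\<in>Ival x N. \<bar>fs j t - fs k t\<bar> = 1"
    using p_mem[of k] by (intro bexI[of _ "p k"]) simp_all
qed

lemma not_compact_op_if_bounded_below:
  assumes "x 0 < x N" and "bounded_below_op x N T"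
    and linear: "\<And>f g. continuous_on (Ival x N) f \<Longrightarrow> continuous_on (Ival x N) g \<Longrightarrow>
      T (\<lambda>t. f t - g t) = (\<lambda>t. T f t - T g t)"
  shows "\<not> compact_op x N T"
proof
  assume "compact_op x N T"
  obtain C where C: "0 < C"
    and below: "\<And>f. continuous_on (Ival x N) f \<Longrightarrow> C * supnorm x N f \<le> supnorm x N (T f)"
    using assms(2) unfolding bounded_below_op_def by blast
  obtain fs :: "nat \<Rightarrow> real \<Rightarrow> real" where fs_cont: "\<And>k. continuous_on (Ival x N) (fs k)"
    and "\<And>k. supnorm x N (fs k) \<le> 1"
    and separated: "\<And>j k. j < k \<Longrightarrow> \<exists>t\<in>Ival x N. \<bar>fs j t - fs k t\<bar> = 1"
    using unit_ball_separated_sequence[OF assms(1)] by blast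
  then obtain r g where "strict_mono r"
    and lim: "uniform_limit (Ival x N) (\<lambda>k. T (fs (r k))) g sequentially"
    using \<open>compact_op x N T\<close> unfolding compact_op_def by blast
  have "\<forall>\<^sub>F k in sequentially. \<forall>t\<in>Ival x N. dist (T (fs (r k)) t) (g t) < C / 4"
    using uniform_limitD[OF lim, of "C / 4"] C by simp
  then obtain k where k: "\<And>j t. k \<le> j \<Longrightarrow> t \<in> Ival x N \<Longrightarrow> dist (T (fs (r j)) t) (g t) < C / 4"
    unfolding eventually_sequentially by blast
  define h where "h t = fs (r k) t - fs (r (Suc k)) t" for t
  have h_cont: "continuous_on (Ival x N) h"
    unfolding h_def using fs_cont by (intro continuous_on_diff)
  have "\<bar>T h t\<bar> \<le> C / 2" if "t \<in> Ival x N" for t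
    using k[OF order_refl that] k[OF le_SucI[OF order_refl] that]
    unfolding h_def linear[OF fs_cont fs_cont] dist_real_def by linarith
  then have "supnorm x N (T h) \<le> C / 2"
    using assms(1) by (intro supnorm_le) (auto simp: Ival_def)
  moreover obtain t where "t \<in> Ival x N" and "\<bar>h t\<bar> = 1"
    using separated[OF strict_monoD[OF \<open>strict_mono r\<close> lessI]] by (auto simp: h_def)
  then have "1 \<le> supnorm x N h"
    using abs_le_supnorm[OF h_cont] by fastforce
  ultimately have "C \<le> C / 2"
    using below[OF h_cont] mult_left_mono[of 1 "supnorm x N h" C] C by linarith
  with C show False by simp
qed

locale interval_partition =
  fixes x :: "nat \<Rightarrow> real" and N :: nat
  assumes N_ge_1: "1 \<le> N" and nodes_increasing: "\<forall>i<N. x i < x (Suc i)"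
begin

lemma nodes_less:
  assumes "i < j" and "j \<le> N"
  shows "x i < x j"
proof (rule lift_Suc_mono_less_ivl[of "{..<N}"])
  show "x n < x (Suc n)" if "n \<in> {..<N}" for n
    using nodes_increasing that by simp
  show "{i..<j} \<subseteq> {..<N}"
    using assms(2) by auto
qed (fact assms(1))

lemma nodes_le: "i \<le> j \<Longrightarrow> j \<le> N \<Longrightarrow> x i \<le> x j"
  using nodes_less by (cases "i = j") (auto intro: less_imp_le)

lemma endpoints_less: "x 0 < x N"
  using nodes_less N_ge_1 by simp

lemma subinterval_subset: "i \<in> {1..N} \<Longrightarrow> {x (i - 1)..x i} \<subseteq> {x 0..x N}"
  using nodes_le by auto

lemma Linv_mem:
  assumes i: "i \<in> {1..N}" and t: "t \<in> {x (i - 1)..x i}"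
  shows "Linv x N i t \<in> {x 0..x N}"
proof -
  define \<theta> where "\<theta> = (t - x (i - 1)) / (x i - x (i - 1))"
  have "0 \<le> \<theta>" "\<theta> \<le> 1"
    using t nodes_less[of "i - 1" i] i by (auto simp: \<theta>_def field_simps)
  then have "0 \<le> \<theta> * (x N - x 0)" "\<theta> * (x N - x 0) \<le> x N - x 0"
    using endpoints_less mult_left_le_one_le[of "x N - x 0" \<theta>] by auto
  moreover have "Linv x N i t = x 0 + \<theta> * (x N - x 0)"
    by (simp add: Linv_def \<theta>_def field_simps)
  ultimately show ?thesis by simp
qed

lemma Linv_left: "Linv x N i (x (i - 1)) = x 0"
  by (simp add: Linv_def)

lemma Linv_right: "i \<in> {1..N} \<Longrightarrow> Linv x N i (x i) = x N"
  using nodes_less[of "i - 1" i] by (simp add: Linv_def)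

lemma continuous_on_Linv: "continuous_on S (Linv x N i)"
proof -
  have "Linv x N i = (\<lambda>t. x 0 + (t - x (i - 1)) * ((x N - x 0) / (x i - x (i - 1))))"
    by (auto simp: Linv_def)
  then show ?thesis by (simp only:) (intro continuous_intros)
qed

definition piece :: "real \<Rightarrow> nat" where
  "piece t = max 1 (LEAST i. t \<le> x i)"

lemma piece_mem:
  assumes t: "t \<in> {x 0..x N}"
  shows "piece t \<in> {1..N}" and "t \<in> {x (piece t - 1)..x (piece t)}"
proof -
  define l where "l = (LEAST i. t \<le> x i)"
  have tl: "t \<le> x l" and lN: "l \<le> N"
    unfolding l_def using t by (auto intro: LeastI Least_le)
  have "piece t \<in> {1..N} \<and> t \<in> {x (piece t - 1)..x (piece t)}"
  proof (cases "l = 0")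
    case True
    then have "t = x 0" "piece t = 1" using t tl by (auto simp: piece_def l_def[symmetric])
    then show ?thesis using N_ge_1 nodes_le[of 0 1] by auto
  next
    case False
    then have "x (l - 1) < t"
      using not_less_Least[of "l - 1" "\<lambda>i. t \<le> x i"] by (simp add: l_def)
    then show ?thesis using False tl lN by (auto simp: piece_def l_def[symmetric])
  qed
  then show "piece t \<in> {1..N}" "t \<in> {x (piece t - 1)..x (piece t)}" by auto
qed

lemma piece_cases:
  assumes i: "i \<in> {1..N}" and t: "t \<in> {x (i - 1)..x i}"
  shows "piece t = i \<or> (t = x (i - 1) \<and> piece t = i - 1 \<and> 2 \<le> i)"
proof -
  define l where "l = (LEAST i. t \<le> x i)"
  have piece_l: "piece t = max 1 l"
    by (simp add: piece_def l_def)
  have "l \<le> i" and tl: "t \<le> x l"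
    unfolding l_def using t by (auto intro: Least_le LeastI)
  have "\<not> l < i - 1"
  proof
    assume "l < i - 1"
    with i have "x l < x (i - 1)" using nodes_less[of l "i - 1"] by auto
    with t tl show False by auto
  qed
  then consider "l = i" | "l = i - 1" "i \<noteq> 1" | "l = 0" "i = 1"
    using \<open>l \<le> i\<close> i by fastforce
  then show ?thesis
  proof cases
    case 1
    then have "piece t = i" using piece_l i by (simp add: max_absorb2)
    then show ?thesis ..
  next
    case 2
    then have "t = x (i - 1)" and "2 \<le> i" using t tl i by auto
    moreover from \<open>2 \<le> i\<close> have "piece t = i - 1" using piece_l 2 by simp
    ultimately show ?thesis by simp
  next
    case 3
    then have "piece t = i" using piece_l by simp
    then show ?thesis ..
  qed
qed

lemma interval_eq_Union_subintervals: "{x 0..x N} = (\<Union>i\<in>{1..N}. {x (i - 1)..x i})"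
proof
  show "{x 0..x N} \<subseteq> (\<Union>i\<in>{1..N}. {x (i - 1)..x i})"
  proof
    fix t assume "t \<in> {x 0..x N}"
    then show "t \<in> (\<Union>i\<in>{1..N}. {x (i - 1)..x i})"
      using piece_mem[of t] by blast
  qed
  show "(\<Union>i\<in>{1..N}. {x (i - 1)..x i}) \<subseteq> {x 0..x N}"
    using subinterval_subset by blast
qed

end

locale fractal_setting = interval_partition +
  fixes \<alpha> :: "nat \<Rightarrow> real"
  assumes abs_alpha_less_1: "\<forall>i\<in>{1..N}. \<bar>\<alpha> i\<bar> < 1"
begin

definition alpha_norm :: real where
  "alpha_norm = Max ((\<lambda>i. \<bar>\<alpha> i\<bar>) ` {1..N})"

lemma abs_alpha_le_alpha_norm: "i \<in> {1..N} \<Longrightarrow> \<bar>\<alpha> i\<bar> \<le> alpha_norm"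
  unfolding alpha_norm_def by (rule Max_ge) auto

lemma alpha_norm_less_1: "alpha_norm < 1"
proof -
  have "alpha_norm \<in> (\<lambda>i. \<bar>\<alpha> i\<bar>) ` {1..N}"
    unfolding alpha_norm_def using N_ge_1 by (intro Max_in) auto
  then show ?thesis using abs_alpha_less_1 by auto
qed

lemma alpha_norm_nonneg: "0 \<le> alpha_norm"
  using abs_alpha_le_alpha_norm[of 1] N_ge_1 by force

definition is_fractal :: "(real \<Rightarrow> real) \<Rightarrow> (real \<Rightarrow> real) \<Rightarrow> (real \<Rightarrow> real) \<Rightarrow> bool" where
  "is_fractal f b g \<longleftrightarrow> continuous_on {x 0..x N} g \<and> (\<forall>t. t \<notin> {x 0..x N} \<longrightarrow> g t = 0) \<and>
     (\<forall>i\<in>{1..N}. \<forall>t\<in>{x (i - 1)..x i}. g t = f t + \<alpha> i * (g (Linv x N i t) - b (Linv x N i t)))"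

lemma fractal_eq_The: "fractal x N \<alpha> f b = (THE g. is_fractal f b g)"
  by (simp add: fractal_def is_fractal_def Ival_def)

text \<open>The Read-Bajraktarevic operator, whose fixed points are the \<alpha>-fractal functions.\<close>
definition RB :: "(real \<Rightarrow> real) \<Rightarrow> (real \<Rightarrow> real) \<Rightarrow> (real \<Rightarrow> real) \<Rightarrow> real \<Rightarrow> real" where
  "RB f b h t = (if t \<in> {x 0..x N}
     then f t + \<alpha> (piece t) * (h (Linv x N (piece t) t) - b (Linv x N (piece t) t)) else 0)"

text \<open>On a shared node both pieces give the same value as long as \<open>h\<close> and \<open>b\<close> agree at the
  endpoints of the interval.\<close>
lemma RB_on_subinterval:
  assumes "h (x 0) = b (x 0)" "h (x N) = b (x N)" and i: "i \<in> {1..N}" and t: "t \<in> {x (i - 1)..x i}"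
  shows "RB f b h t = f t + \<alpha> i * (h (Linv x N i t) - b (Linv x N i t))"
proof -
  have tI: "t \<in> {x 0..x N}" using subinterval_subset i t by blast
  from piece_cases[OF i t] show ?thesis
  proof
    assume "piece t = i"
    then show ?thesis using tI by (simp add: RB_def)
  next
    assume "t = x (i - 1) \<and> piece t = i - 1 \<and> 2 \<le> i"
    then have "t = x (i - 1)" and piece_t: "piece t = i - 1" and "i - 1 \<in> {1..N}"
      using i by auto
    then have "Linv x N (i - 1) t = x N" and "Linv x N i t = x 0"
      using Linv_right Linv_left by fastforce+
    moreover have "RB f b h t = f t + \<alpha> (i - 1) * (h (Linv x N (i - 1) t) - b (Linv x N (i - 1) t))"
      using tI by (simp add: RB_def piece_t)
    ultimately show ?thesis using assms(1,2) by simp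
  qed
qed

definition admissible :: "(real \<Rightarrow> real) \<Rightarrow> (real \<Rightarrow> real) \<Rightarrow> bool" where
  "admissible b h \<longleftrightarrow> continuous_on {x 0..x N} h \<and> (\<forall>t. t \<notin> {x 0..x N} \<longrightarrow> h t = 0)
     \<and> h (x 0) = b (x 0) \<and> h (x N) = b (x N)"

lemma RB_admissible:
  assumes f: "continuous_on {x 0..x N} f" and b: "continuous_on {x 0..x N} b"
    and fb: "b (x 0) = f (x 0)" "b (x N) = f (x N)" and h: "admissible b h"
  shows "admissible b (RB f b h)"
proof -
  have hc: "continuous_on {x 0..x N} h" and hb: "h (x 0) = b (x 0)" "h (x N) = b (x N)"
    using h by (auto simp: admissible_def)
  have "continuous_on {x (i - 1)..x i} (RB f b h)" if i: "i \<in> {1..N}" for i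
  proof -
    have sub: "{x (i - 1)..x i} \<subseteq> {x 0..x N}" using subinterval_subset[OF i] .
    have L: "Linv x N i ` {x (i - 1)..x i} \<subseteq> {x 0..x N}" using Linv_mem[OF i] by auto
    have "continuous_on {x (i - 1)..x i} (\<lambda>t. f t + \<alpha> i * (h (Linv x N i t) - b (Linv x N i t)))"
      by (intro continuous_intros continuous_on_subset[OF f sub]
          continuous_on_compose2[OF hc continuous_on_Linv L]
          continuous_on_compose2[OF b continuous_on_Linv L])
    then show ?thesis
      by (rule continuous_on_cong[THEN iffD1, rotated 2]) (auto simp: RB_on_subinterval[OF hb i])
  qed
  then have "continuous_on {x 0..x N} (RB f b h)"
    by (subst interval_eq_Union_subintervals) (intro continuous_on_closed_Union; simp)
  moreover have "RB f b h (x 0) = b (x 0)"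
    using RB_on_subinterval[OF hb, of 1 "x 0"] N_ge_1 nodes_le[of 0 1] fb Linv_left[of 1] hb by simp
  moreover have "RB f b h (x N) = b (x N)"
    using RB_on_subinterval[OF hb, of N "x N"] N_ge_1 nodes_le[of "N - 1" N] fb Linv_right[of N] hb
    by simp
  ultimately show ?thesis by (simp add: admissible_def RB_def)
qed

lemma RB_contracts:
  assumes "\<forall>s\<in>{x 0..x N}. \<bar>h1 s - h2 s\<bar> \<le> M" and t: "t \<in> {x 0..x N}"
  shows "\<bar>RB f b h1 t - RB f b h2 t\<bar> \<le> alpha_norm * M"
proof -
  let ?i = "piece t"
  have "Linv x N ?i t \<in> {x 0..x N}" using Linv_mem piece_mem[OF t] by blast
  then have "\<bar>\<alpha> ?i\<bar> * \<bar>h1 (Linv x N ?i t) - h2 (Linv x N ?i t)\<bar> \<le> alpha_norm * M"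
    using abs_alpha_le_alpha_norm[OF piece_mem(1)[OF t]] assms(1) alpha_norm_nonneg
    by (intro mult_mono) auto
  moreover have "RB f b h1 t - RB f b h2 t = \<alpha> ?i * (h1 (Linv x N ?i t) - h2 (Linv x N ?i t))"
    using t by (simp add: RB_def algebra_simps)
  ultimately show ?thesis by (simp add: abs_mult)
qed

lemma RB_is_fractal:
  assumes "is_fractal f b g"
  shows "RB f b g = g"
proof
  fix t
  show "RB f b g t = g t"
  proof (cases "t \<in> {x 0..x N}")
    case True
    then show ?thesis
      using assms piece_mem[OF True] by (simp add: RB_def is_fractal_def)
  next
    case False
    then show ?thesis using assms by (auto simp: RB_def is_fractal_def)
  qed
qed

lemma is_fractal_unique:
  assumes g1: "is_fractal f b g1" and g2: "is_fractal f b g2"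
  shows "g1 = g2"
proof
  fix t
  show "g1 t = g2 t"
  proof (cases "t \<in> {x 0..x N}")
    case t: True
    have "continuous_on {x 0..x N} (\<lambda>t. g1 t - g2 t)"
      using g1 g2 by (intro continuous_on_diff) (auto simp: is_fractal_def)
    then obtain M where M: "\<forall>t\<in>{x 0..x N}. \<bar>g1 t - g2 t\<bar> \<le> M"
      using continuous_on_abs_bounded by blast
    have "\<forall>t\<in>{x 0..x N}. \<bar>g1 t - g2 t\<bar> \<le> alpha_norm ^ k * M" for k
    proof (induction k)
      case (Suc k)
      then show ?case
        using RB_contracts[of g1 g2 "alpha_norm ^ k * M" _ f b] RB_is_fractal[OF g1] RB_is_fractal[OF g2]
        by (simp add: mult.assoc)
    qed (use M in simp)
    moreover have "(\<lambda>k. alpha_norm ^ k * M) \<longlonglongrightarrow> 0"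
      using alpha_norm_nonneg alpha_norm_less_1 by (intro tendsto_mult_left_zero LIMSEQ_power_zero) auto
    ultimately have "\<bar>g1 t - g2 t\<bar> \<le> 0"
      using t by (intro LIMSEQ_le_const[of "\<lambda>k. alpha_norm ^ k * M"]) auto
    then show ?thesis by simp
  next
    case False
    then show ?thesis using g1 g2 by (simp add: is_fractal_def)
  qed
qed

lemma is_fractal_exists:
  assumes f: "continuous_on {x 0..x N} f" and b: "continuous_on {x 0..x N} b"
    and fb: "b (x 0) = f (x 0)" "b (x N) = f (x N)"
  obtains g where "is_fractal f b g"
proof -
  define g where "g k = (RB f b ^^ k) (\<lambda>t. if t \<in> {x 0..x N} then b t else 0)" for k
  have g_Suc: "g (Suc k) = RB f b (g k)" for k
    by (simp add: g_def)
  have "admissible b (g 0)"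
    using b endpoints_less by (auto simp: admissible_def g_def intro: continuous_on_eq)
  then have adm: "admissible b (g k)" for k
    by (induction k) (simp_all add: g_Suc RB_admissible[OF f b fb])
  then have "continuous_on {x 0..x N} (\<lambda>t. g 1 t - g 0 t)"
    by (intro continuous_on_diff) (auto simp: admissible_def)
  then obtain D where D: "\<forall>t\<in>{x 0..x N}. \<bar>g 1 t - g 0 t\<bar> \<le> D"
    using continuous_on_abs_bounded by blast
  have "\<forall>t\<in>{x 0..x N}. \<bar>g (Suc k) t - g k t\<bar> \<le> alpha_norm ^ k * D" for k
  proof (induction k)
    case (Suc k)
    then show ?case
      using RB_contracts[of "g (Suc k)" "g k" "alpha_norm ^ k * D"] by (simp add: g_Suc mult.assoc)
  qed (use D in simp)
  then have lim: "uniform_limit {x 0..x N} g (\<lambda>t. g 0 t + (\<Sum>k. g (Suc k) t - g k t)) sequentially"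
    using alpha_norm_nonneg alpha_norm_less_1 by (intro uniform_limit_geometric_increments[where D = D]) auto
  define G where "G t = g 0 t + (\<Sum>k. g (Suc k) t - g k t)" for t
  have "continuous_on {x 0..x N} G"
    using lim adm unfolding G_def by (intro uniform_limit_theorem) (auto simp: admissible_def)
  moreover have "G t = 0" if "t \<notin> {x 0..x N}" for t
    using adm that by (simp add: G_def admissible_def)
  moreover have "G t = f t + \<alpha> i * (G (Linv x N i t) - b (Linv x N i t))"
    if i: "i \<in> {1..N}" and t: "t \<in> {x (i - 1)..x i}" for i t
  proof -
    have tI: "t \<in> {x 0..x N}" and LI: "Linv x N i t \<in> {x 0..x N}"
      using subinterval_subset Linv_mem i t by blast+
    have "(\<lambda>k. g (Suc k) t) \<longlonglongrightarrow> G t"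
      using tendsto_uniform_limitI[OF lim tI] unfolding G_def by (rule LIMSEQ_Suc)
    moreover have "(\<lambda>k. g (Suc k) t) \<longlonglongrightarrow> f t + \<alpha> i * (G (Linv x N i t) - b (Linv x N i t))"
    proof -
      have "g (Suc k) t = f t + \<alpha> i * (g k (Linv x N i t) - b (Linv x N i t))" for k
        using adm[of k] by (simp add: g_Suc RB_on_subinterval[OF _ _ i t] admissible_def)
      moreover have "(\<lambda>k. g k (Linv x N i t)) \<longlonglongrightarrow> G (Linv x N i t)"
        using tendsto_uniform_limitI[OF lim LI] unfolding G_def .
      ultimately show ?thesis
        by (simp only:) (intro tendsto_intros)
    qed
    ultimately show ?thesis
      by (rule LIMSEQ_unique)
  qed
  ultimately show ?thesis
    using that unfolding is_fractal_def by blast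
qed

lemma fractal_is_fractal:
  assumes "continuous_on {x 0..x N} f" "continuous_on {x 0..x N} b"
    and "b (x 0) = f (x 0)" "b (x N) = f (x N)"
  shows "is_fractal f b (fractal x N \<alpha> f b)"
  using is_fractal_exists[OF assms] is_fractal_unique unfolding fractal_eq_The by (metis theI)

lemma fractal_eqI: "is_fractal f b g \<Longrightarrow> fractal x N \<alpha> f b = g"
  unfolding fractal_eq_The using is_fractal_unique by blast

lemma fractal_op_is_fractal:
  assumes "1 \<le> n" and "continuous_on {x 0..x N} f"
  shows "is_fractal f (bernstein x N n f) (fractal_op x N \<alpha> n f)"
  unfolding fractal_op_def using assms endpoints_less
  by (intro fractal_is_fractal)
    (simp_all add: continuous_on_bernstein bernstein_left_endpoint bernstein_right_endpoint)

lemma fractal_op_diff: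
  assumes n: "1 \<le> n" and f: "continuous_on {x 0..x N} f" and g: "continuous_on {x 0..x N} g"
  shows "fractal_op x N \<alpha> n (\<lambda>t. f t - g t) = (\<lambda>t. fractal_op x N \<alpha> n f t - fractal_op x N \<alpha> n g t)"
  unfolding fractal_op_def[of _ _ _ _ "\<lambda>t. f t - g t"]
proof (rule fractal_eqI)
  let ?Ff = "fractal_op x N \<alpha> n f" and ?Fg = "fractal_op x N \<alpha> n g"
  have "is_fractal f (bernstein x N n f) ?Ff" and "is_fractal g (bernstein x N n g) ?Fg"
    using fractal_op_is_fractal n f g by blast+
  then have cont: "continuous_on {x 0..x N} ?Ff" "continuous_on {x 0..x N} ?Fg"
    and zero: "\<And>t. t \<notin> {x 0..x N} \<Longrightarrow> ?Ff t = 0 \<and> ?Fg t = 0"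
    and eq: "\<And>i t. i \<in> {1..N} \<Longrightarrow> t \<in> {x (i - 1)..x i} \<Longrightarrow>
      ?Ff t = f t + \<alpha> i * (?Ff (Linv x N i t) - bernstein x N n f (Linv x N i t)) \<and>
      ?Fg t = g t + \<alpha> i * (?Fg (Linv x N i t) - bernstein x N n g (Linv x N i t))"
    unfolding is_fractal_def by blast+
  show "is_fractal (\<lambda>t. f t - g t) (bernstein x N n (\<lambda>t. f t - g t)) (\<lambda>t. ?Ff t - ?Fg t)"
    unfolding is_fractal_def bernstein_diff[symmetric]
  proof (intro conjI allI impI ballI)
    show "continuous_on {x 0..x N} (\<lambda>t. ?Ff t - ?Fg t)"
      using cont by (rule continuous_on_diff)
  next
    fix t assume "t \<notin> {x 0..x N}"
    then show "?Ff t - ?Fg t = 0" using zero by simp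
  next
    fix i t assume "i \<in> {1..N}" "t \<in> {x (i - 1)..x i}"
    then have "?Ff t = f t + \<alpha> i * (?Ff (Linv x N i t) - bernstein x N n f (Linv x N i t))"
      and "?Fg t = g t + \<alpha> i * (?Fg (Linv x N i t) - bernstein x N n g (Linv x N i t))"
      using eq by blast+
    then show "?Ff t - ?Fg t = f t - g t + \<alpha> i * (?Ff (Linv x N i t) - ?Fg (Linv x N i t)
        - (bernstein x N n f (Linv x N i t) - bernstein x N n g (Linv x N i t)))"
      by (simp only:) (simp add: algebra_simps)
  qed
qed

lemma supnorm_le_fractal_op:
  assumes n: "1 \<le> n" and f: "continuous_on {x 0..x N} f"
  shows "supnorm x N f \<le> (1 + alpha_norm) / (1 - alpha_norm) * supnorm x N (fractal_op x N \<alpha> n f)"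
proof -
  let ?F = "fractal_op x N \<alpha> n f" and ?B = "bernstein x N n f"
  define D where "D = supnorm x N f"
  define S where "S = supnorm x N ?F"
  have F: "is_fractal f ?B ?F"
    using fractal_op_is_fractal[OF n f] .
  have "\<bar>f t\<bar> \<le> S + alpha_norm * (S + D)" if t: "t \<in> {x 0..x N}" for t
  proof -
    define i where "i = piece t"
    define s where "s = Linv x N i t"
    have i: "i \<in> {1..N}" "t \<in> {x (i - 1)..x i}" and s: "s \<in> {x 0..x N}"
      using piece_mem[OF t] Linv_mem by (auto simp: i_def s_def)
    have F_bound: "\<bar>?F u\<bar> \<le> S" if "u \<in> {x 0..x N}" for u
      using F that abs_le_supnorm[of x N ?F] by (simp add: S_def is_fractal_def Ival_def)
    have "\<bar>?B s\<bar> \<le> D"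
      using bernstein_abs_le[OF endpoints_less _ s] abs_le_supnorm[of x N f] f
      by (simp add: D_def Ival_def)
    then have "\<bar>?F s - ?B s\<bar> \<le> S + D"
      using F_bound[OF s] by linarith
    then have "\<bar>\<alpha> i * (?F s - ?B s)\<bar> \<le> alpha_norm * (S + D)"
      unfolding abs_mult using abs_alpha_le_alpha_norm[OF i(1)] alpha_norm_nonneg
      by (intro mult_mono) auto
    moreover have "f t = ?F t - \<alpha> i * (?F s - ?B s)"
      using F i by (simp add: is_fractal_def s_def)
    ultimately show ?thesis
      using F_bound[OF t] by linarith
  qed
  then have "D \<le> S + alpha_norm * (S + D)"
    unfolding D_def using endpoints_less by (intro supnorm_le) (auto simp: Ival_def)
  then show ?thesis
    using alpha_norm_less_1 by (simp add: D_def S_def field_simps)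
qed

end

theorem mainTheorem15:
  fixes x :: "nat \<Rightarrow> real" and N :: nat and \<alpha> :: "nat \<Rightarrow> real" and n :: nat
  assumes "N \<ge> 2"
    and "\<forall>i<N. x i < x (Suc i)"
    and "\<forall>i\<in>{1..N}. \<bar>\<alpha> i\<bar> < 1"
    and "n \<ge> 1"
  shows "bounded_below_op x N (fractal_op x N \<alpha> n) \<and> \<not> compact_op x N (fractal_op x N \<alpha> n)"
proof -
  interpret fractal_setting x N \<alpha>
    using assms by unfold_locales auto
  have "0 < (1 + alpha_norm) / (1 - alpha_norm)"
    using alpha_norm_nonneg alpha_norm_less_1 by simp
  then have "bounded_below_op x N (fractal_op x N \<alpha> n)"
    using supnorm_le_fractal_op assms(4) by (intro bounded_below_opI) (auto simp: Ival_def)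
  moreover have "\<not> compact_op x N (fractal_op x N \<alpha> n)"
    using endpoints_less calculation fractal_op_diff assms(4)
    by (intro not_compact_op_if_bounded_below) (auto simp: Ival_def)
  ultimately show ?thesis ..
qed

end
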